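(* Let $\mathcal{H}$ be a finite-dimensional Hilbert space, let $U_0$ be a unitary operator on $\mathcal{H}$, let $\{p_\omega\}_{\omega\in\Omega}$ be a probability distribution on a finite index set $\Omega$, and for each $\omega\in\Omega$ let $U_\omega$ be a unitary operator on $\mathcal{H}$. Let $\ket{\psi_0}\in\mathcal{H}$ be a unit vector and let $\rho_0$ be a density operator on $\mathcal{H}$. Define $$\rho=\sum_{\omega\in\Omega}p_\omega U_\omega\rho_0U_\omega^\dagger,\qquad \sigma=U_0\ket{\psi_0}\bra{\psi_0}U_0^\dagger .$$ Then $$D(\rho,\sigma)\le D(\rho_0,\ket{\psi_0}\bra{\psi_0})+2\Big\|\sum_{\omega}p_\omega U_\omega-U_0\Big\|+\sum_{\omega}p_\omega\|U_\omega-U_0\|^2,$$ i.e. $D(\rho,\sigma)\le D(\rho_0,\ket{\psi_0}\bra{\psi_0})+2\|E(U_\omega)-U_0\|+E(\|U_\omega-U_0\|^2)$, where $E$ denotes expectation with respect to $\{p_\omega\}$.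
   Context: $D(A,B)={\rm Tr}|A-B|$ denotes the trace distance between operators $A,B$ (with $|X|=\sqrt{X^\dagger X}$), and $\|\cdot\|$ denotes the operator norm. *)

theory Defs
  imports "HOL-Analysis.Analysis"
begin

text \<open>Finite-dimensional Hilbert space = complex^'n with the standard inner product.
Operators are complex matrices complex^'n^'n acting by matrix-vector product.\<close>

definition cadj :: "complex^'n^'m \<Rightarrow> complex^'m^'n" where
  "cadj A = (\<chi> i j. cnj (A $ j $ i))"

definition cinner :: "complex^'n \<Rightarrow> complex^'n \<Rightarrow> complex" where
  "cinner x y = (\<Sum>i\<in>UNIV. cnj (x $ i) * y $ i)"

definition unitary :: "complex^'n^'n \<Rightarrow> bool" where
  "unitary U \<longleftrightarrow> cadj U ** U = mat 1 \<and> U ** cadj U = mat 1"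

definition hermitian :: "complex^'n^'n \<Rightarrow> bool" where
  "hermitian A \<longleftrightarrow> cadj A = A"

definition psd :: "complex^'n^'n \<Rightarrow> bool" where
  "psd A \<longleftrightarrow> hermitian A \<and> (\<forall>x. 0 \<le> Re (cinner x (A *v x)))"

definition density_op :: "complex^'n^'n \<Rightarrow> bool" where
  "density_op \<rho> \<longleftrightarrow> psd \<rho> \<and> trace \<rho> = 1"

text \<open>|X| = sqrt(X^dagger X): the unique positive semidefinite square root.\<close>
definition mat_abs :: "complex^'n^'n \<Rightarrow> complex^'n^'n" where
  "mat_abs X = (THE B. psd B \<and> B ** B = cadj X ** X)"

definition trace_dist :: "complex^'n^'n \<Rightarrow> complex^'n^'n \<Rightarrow> real" where
  "trace_dist A B = Re (trace (mat_abs (A - B)))"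

definition op_norm :: "complex^'n^'n \<Rightarrow> real" where
  "op_norm A = onorm (\<lambda>x. A *v x)"

definition ket_bra :: "complex^'n \<Rightarrow> complex^'n \<Rightarrow> complex^'n^'n" where
  "ket_bra x y = (\<chi> i j. x $ i * cnj (y $ j))"

end

theory Submission
  imports Defs
begin

text \<open>For Hermitian \<open>X\<close> the trace norm is variational: \<open>Tr|X| = max Re Tr(C X)\<close> over
contractions \<open>C\<close>, the maximum being attained at \<open>C = sgn X\<close>; both halves come from the spectral
theorem, proved here by maximising the Rayleigh quotient on invariant subspaces.
Choose \<open>C\<close> optimal for \<open>\<rho> - \<sigma>\<close>. Since \<open>U\<^sub>\<omega>\<^sup>\<dagger> C U\<^sub>\<omega>\<close> is again a contraction, each term of \<open>\<rho>\<close>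
satisfies \<open>Re Tr(C U\<^sub>\<omega> \<rho>\<^sub>0 U\<^sub>\<omega>\<^sup>\<dagger>) \<le> D(\<rho>\<^sub>0, |\<psi>\<^sub>0\<rangle>\<langle>\<psi>\<^sub>0|) + \<langle>U\<^sub>\<omega>\<psi>\<^sub>0, C U\<^sub>\<omega>\<psi>\<^sub>0\<rangle>\<close>, while
\<open>Re Tr(C \<sigma>) = \<langle>a, C a\<rangle>\<close> with \<open>a = U\<^sub>0\<psi>\<^sub>0\<close>. Writing \<open>U\<^sub>\<omega>\<psi>\<^sub>0 = a + d\<^sub>\<omega>\<close> and averaging the
quadratic form \<open>\<langle>x, C x\<rangle>\<close>, the cross terms involve only \<open>E d\<^sub>\<omega> = (E U\<^sub>\<omega> - U\<^sub>0)\<psi>\<^sub>0\<close>, and the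
remainder \<open>E\<langle>d\<^sub>\<omega>, C d\<^sub>\<omega>\<rangle>\<close> is at most \<open>E\<parallel>U\<^sub>\<omega> - U\<^sub>0\<parallel>\<^sup>2\<close>.\<close>

lemma scaleR_vec_eq_smult: "r *\<^sub>R (x :: complex^'n) = complex_of_real r *s x"
  by (simp add: vec_eq_iff scaleR_conv_of_real[symmetric])

lemma cinner_zero_left [simp]: "cinner 0 x = 0"
  by (simp add: cinner_def)

lemma cinner_zero_right [simp]: "cinner x 0 = 0"
  by (simp add: cinner_def)

lemma cinner_add_left: "cinner (x + y) z = cinner x z + cinner y z"
  by (simp add: cinner_def distrib_right sum.distrib)

lemma cinner_add_right: "cinner x (y + z) = cinner x y + cinner x z"
  by (simp add: cinner_def distrib_left sum.distrib)

lemma cinner_diff_right: "cinner x (y - z) = cinner x y - cinner x z"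
  by (simp add: cinner_def right_diff_distrib sum_subtractf)

lemma cinner_smult_left: "cinner (c *s x) y = cnj c * cinner x y"
  by (simp add: cinner_def sum_distrib_left ac_simps)

lemma cinner_smult_right: "cinner x (c *s y) = c * cinner x y"
  by (simp add: cinner_def sum_distrib_left ac_simps)

lemma cinner_scaleR_left: "cinner (r *\<^sub>R x) y = of_real r * cinner x y"
  by (simp add: scaleR_vec_eq_smult cinner_smult_left)

lemma cinner_scaleR_right: "cinner x (r *\<^sub>R y) = of_real r * cinner x y"
  by (simp add: scaleR_vec_eq_smult cinner_smult_right)

lemma cinner_sum_left: "cinner (\<Sum>i\<in>I. f i) y = (\<Sum>i\<in>I. cinner (f i) y)"
  by (induct I rule: infinite_finite_induct) (auto simp: cinner_add_left)

lemma cinner_sum_right: "cinner x (\<Sum>i\<in>I. f i) = (\<Sum>i\<in>I. cinner x (f i))"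
  by (induct I rule: infinite_finite_induct) (auto simp: cinner_add_right)

lemma cinner_commute: "cinner y x = cnj (cinner x y)"
  by (simp add: cinner_def ac_simps)

lemma Re_cinner: "Re (cinner x y) = inner x y"
  by (simp add: cinner_def inner_vec_def inner_complex_def)

lemma cinner_self: "cinner x x = of_real ((norm x)\<^sup>2)"
proof -
  have "cinner x x = (\<Sum>i\<in>UNIV. of_real ((cmod (x $ i))\<^sup>2))"
    unfolding cinner_def by (intro sum.cong refl) (metis complex_norm_square mult.commute)
  also have "\<dots> = of_real ((norm x)\<^sup>2)"
    by (simp add: norm_vec_def L2_set_def sum_nonneg)
  finally show ?thesis .
qed

lemma cinner_self_eq_1_iff: "cinner x x = 1 \<longleftrightarrow> norm x = 1"
  unfolding cinner_self of_real_eq_1_iff by (smt (verit) norm_ge_zero power2_eq_1_iff)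

lemma cinner_mult_vector_left: "cinner x (A *v y) = cinner (cadj A *v x) y"
proof -
  have "cinner x (A *v y) = (\<Sum>i\<in>UNIV. \<Sum>j\<in>UNIV. cnj (x$i) * A$i$j * y$j)"
    unfolding cinner_def matrix_vector_mult_def by (simp add: sum_distrib_left mult.assoc)
  also have "\<dots> = (\<Sum>j\<in>UNIV. \<Sum>i\<in>UNIV. cnj (x$i) * A$i$j * y$j)"
    by (rule sum.swap)
  also have "\<dots> = cinner (cadj A *v x) y"
    unfolding cinner_def matrix_vector_mult_def cadj_def
    by (simp add: sum_distrib_right sum_distrib_left mult.commute mult.left_commute)
  finally show ?thesis .
qed

lemma cadj_add: "cadj (A + B) = cadj A + cadj B"
  by (simp add: cadj_def vec_eq_iff)

lemma cadj_diff: "cadj (A - B) = cadj A - cadj B"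
  by (simp add: cadj_def vec_eq_iff)

lemma cadj_scaleR: "cadj (r *\<^sub>R A) = r *\<^sub>R cadj A"
  by (simp add: cadj_def vec_eq_iff)

lemma cadj_sum: "cadj (\<Sum>i\<in>I. M i) = (\<Sum>i\<in>I. cadj (M i))"
  by (induct I rule: infinite_finite_induct) (auto simp: cadj_add cadj_def vec_eq_iff)

lemma cadj_cadj: "cadj (cadj A) = A"
  by (simp add: cadj_def vec_eq_iff)

lemma cadj_mult: "cadj (A ** B) = cadj B ** cadj A"
  by (simp add: cadj_def vec_eq_iff matrix_matrix_mult_def mult.commute)

lemma cadj_ket_bra: "cadj (ket_bra u v) = ket_bra v u"
  by (simp add: cadj_def ket_bra_def vec_eq_iff)

lemma ket_bra_mult_vector: "ket_bra u v *v x = cinner v x *s u"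
  by (simp add: ket_bra_def matrix_vector_mult_def cinner_def vec_eq_iff sum_distrib_left ac_simps)

lemma trace_mult_ket_bra: "trace (C ** ket_bra u v) = cinner v (C *v u)"
  by (simp add: trace_def ket_bra_def matrix_matrix_mult_def cinner_def matrix_vector_mult_def
      sum_distrib_left ac_simps)

lemma trace_sum: "trace (\<Sum>i\<in>I. M i) = (\<Sum>i\<in>I. trace (M i :: 'a::semiring_1^'n^'n))"
  unfolding trace_def by (simp add: sum_component) (rule sum.swap)

lemma trace_scaleR: "trace (r *\<^sub>R (M :: complex^'n^'n)) = of_real r * trace M"
proof -
  have "trace (r *\<^sub>R M) = r *\<^sub>R trace M" by (simp add: trace_def scaleR_sum_right)
  then show ?thesis by (simp add: scaleR_conv_of_real)
qed

lemma matrix_vector_mult_scaleR_right: "A *v (r *\<^sub>R x) = r *\<^sub>R (A *v (x :: 'a::real_algebra_1^'n))"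
  by (simp add: linear_scale)

lemma matrix_vector_mult_sum_right: "A *v (\<Sum>i\<in>I. f i) = (\<Sum>i\<in>I. A *v (f i :: 'a::real_algebra_1^'n))"
  by (simp add: linear_sum)

lemma matrix_vector_mult_sum_left: "(\<Sum>i\<in>I. M i) *v x = (\<Sum>i\<in>I. M i *v (x :: 'a::semiring_1^'n))"
  by (induct I rule: infinite_finite_induct) (auto simp: matrix_vector_mult_add_rdistrib)

lemma matrix_vector_mult_scaleR_left: "(r *\<^sub>R M) *v x = r *\<^sub>R (M *v (x :: 'a::real_algebra_1^'n))"
  by (simp add: vec_eq_iff matrix_vector_mult_def scaleR_sum_right)

lemma matrix_mult_sum_right: "C ** (\<Sum>i\<in>I. M i) = (\<Sum>i\<in>I. C ** (M i :: 'a::semiring_1^'n^'m))"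
  by (induct I rule: infinite_finite_induct) (auto simp: matrix_add_ldistrib)

lemma matrix_mult_diff_right: "C ** (A - B) = C ** A - C ** (B :: 'a::ring_1^'n^'m)"
  by (simp add: vec_eq_iff matrix_matrix_mult_def right_diff_distrib sum_subtractf)

lemma matrix_mult_scaleR_right: "C ** (r *\<^sub>R M) = r *\<^sub>R (C ** (M :: 'a::real_algebra_1^'n^'m))"
  by (simp add: matrix_scalar_ac scalar_matrix_assoc)

lemma trace_mult_conj: "trace (C ** (U ** M ** cadj U)) = trace ((cadj U ** C ** U) ** (M :: complex^'n^'n))"
  by (metis matrix_mul_assoc trace_mul_sym)

lemma hermitian_cinner: "hermitian A \<Longrightarrow> cinner x (A *v y) = cinner (A *v x) y"
  by (simp add: hermitian_def cinner_mult_vector_left)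

lemma hermitian_inner: "hermitian A \<Longrightarrow> inner x (A *v y) = inner (A *v x) y"
  by (metis hermitian_cinner Re_cinner)

lemma hermitian_diff: "hermitian A \<Longrightarrow> hermitian B \<Longrightarrow> hermitian (A - B)"
  by (simp add: hermitian_def cadj_diff)

lemma hermitian_conj: "hermitian M \<Longrightarrow> hermitian (U ** M ** cadj U)"
  by (simp add: hermitian_def cadj_mult cadj_cadj matrix_mul_assoc)

lemma hermitian_ket_bra: "hermitian (ket_bra v v)"
  by (simp add: hermitian_def cadj_ket_bra)

lemma hermitian_sum_scaleR: "(\<And>i. i \<in> I \<Longrightarrow> hermitian (M i)) \<Longrightarrow> hermitian (\<Sum>i\<in>I. r i *\<^sub>R M i)"
  by (simp add: hermitian_def cadj_sum cadj_scaleR)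

lemma psd_inner_nonneg: "psd T \<Longrightarrow> 0 \<le> inner x (T *v x)"
  by (metis psd_def Re_cinner)

lemma unitary_cadj: "unitary U \<Longrightarrow> unitary (cadj U)"
  by (simp add: unitary_def cadj_cadj)

lemma unitary_norm_mult_vector:
  assumes "unitary U"
  shows "norm (U *v x) = norm x"
proof -
  have "cinner (U *v x) (U *v x) = cinner ((cadj U ** U) *v x) x"
    by (simp add: cinner_mult_vector_left matrix_vector_mul_assoc)
  also have "\<dots> = cinner x x"
    using assms by (simp add: unitary_def)
  finally have "complex_of_real ((norm (U *v x))\<^sup>2) = complex_of_real ((norm x)\<^sup>2)"
    by (simp only: cinner_self)
  then show ?thesis
    by (simp only: of_real_eq_iff power2_eq_iff_nonneg norm_ge_zero)
qed

section \<open>Orthonormal bases\<close>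

definition orthonormal :: "(complex^'n) set \<Rightarrow> bool" where
  "orthonormal B \<longleftrightarrow> (\<forall>b\<in>B. \<forall>c\<in>B. cinner b c = (if b = c then 1 else 0))"

definition orthonormal_basis :: "(complex^'n) set \<Rightarrow> bool" where
  "orthonormal_basis B \<longleftrightarrow> finite B \<and> orthonormal B \<and> (\<forall>x. (\<Sum>b\<in>B. cinner b x *s b) = x)"

lemma orthonormal_norm: "orthonormal B \<Longrightarrow> b \<in> B \<Longrightarrow> norm b = 1"
  by (simp add: orthonormal_def flip: cinner_self_eq_1_iff)

lemma orthonormal_finite_card:
  assumes "orthonormal (B :: (complex^'n) set)"
  shows "finite B \<and> card B \<le> DIM(complex^'n)"
proof (rule independent_bound, rule pairwise_orthogonal_independent)
  show "pairwise orthogonal B"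
    using assms unfolding pairwise_def orthogonal_def orthonormal_def
    by (metis Re_cinner zero_complex.simps(1))
  show "0 \<notin> B"
    using assms unfolding orthonormal_def by force
qed

lemma cinner_orthonormal_sum:
  assumes "orthonormal B" "finite B" "c \<in> B"
  shows "cinner c (\<Sum>b\<in>B. f b *s b) = f c"
proof -
  have "cinner c (\<Sum>b\<in>B. f b *s b) = (\<Sum>b\<in>B. f b * cinner c b)"
    by (simp add: cinner_sum_right cinner_smult_right)
  also have "\<dots> = (\<Sum>b\<in>B. if b = c then f c else 0)"
    using assms by (intro sum.cong) (auto simp: orthonormal_def)
  finally show ?thesis
    using assms by simp
qed

lemma norm_orthonormal_sum_squared:
  assumes "orthonormal B" "finite B"
  shows "(norm (\<Sum>b\<in>B. f b *s b))\<^sup>2 = (\<Sum>b\<in>B. (cmod (f b))\<^sup>2)"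
proof -
  let ?s = "\<Sum>b\<in>B. f b *s b"
  have "complex_of_real ((norm ?s)\<^sup>2) = cinner ?s ?s"
    by (simp add: cinner_self)
  also have "\<dots> = (\<Sum>b\<in>B. cnj (f b) * f b)"
    using assms by (simp add: cinner_sum_left cinner_smult_left cinner_orthonormal_sum)
  also have "\<dots> = complex_of_real (\<Sum>b\<in>B. (cmod (f b))\<^sup>2)"
    by (simp only: of_real_sum complex_norm_square mult.commute)
  finally show ?thesis
    by (simp only: of_real_eq_iff)
qed

lemma orthonormal_basis_parseval:
  "orthonormal_basis B \<Longrightarrow> (norm x)\<^sup>2 = (\<Sum>b\<in>B. (cmod (cinner b x))\<^sup>2)"
  using norm_orthonormal_sum_squared[of B "\<lambda>b. cinner b x"] by (simp add: orthonormal_basis_def)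

lemma matrix_eq_on_orthonormal_basis:
  assumes "orthonormal_basis B" "\<And>b. b \<in> B \<Longrightarrow> M *v b = N *v b"
  shows "M = (N :: complex^'n^'n)"
proof (subst matrix_eq, intro allI)
  fix x :: "complex^'n"
  have x: "(\<Sum>b\<in>B. cinner b x *s b) = x"
    using assms(1) by (simp add: orthonormal_basis_def)
  have "M *v (\<Sum>b\<in>B. cinner b x *s b) = N *v (\<Sum>b\<in>B. cinner b x *s b)"
    by (simp add: matrix_vector_mult_sum_right vector_scalar_commute assms(2))
  then show "M *v x = N *v x"
    by (simp only: x)
qed

section \<open>Spectral theorem for Hermitian matrices\<close>

lemma le_0_if_le_mult_square:
  fixes a c :: real
  assumes "\<And>t. 0 < t \<Longrightarrow> t * a \<le> t\<^sup>2 * c"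
  shows "a \<le> 0"
proof (rule ccontr)
  assume "\<not> a \<le> 0"
  define t where "t = a / (\<bar>c\<bar> + 1)"
  have "0 < t" "t * \<bar>c\<bar> < a"
    using \<open>\<not> a \<le> 0\<close> by (auto simp: t_def field_simps)
  have "t\<^sup>2 * c \<le> t * (t * \<bar>c\<bar>)"
    using \<open>0 < t\<close> by (simp add: power2_eq_square mult_left_mono)
  also have "\<dots> < t * a"
    using \<open>0 < t\<close> \<open>t * \<bar>c\<bar> < a\<close> by simp
  finally show False
    using assms[OF \<open>0 < t\<close>] by linarith
qed

lemma psd_mult_vector_eq_0:
  assumes "psd T" "inner v (T *v v) = 0"
  shows "T *v v = 0"
proof -
  define w where "w = T *v v"
  have "2 * inner w w \<le> 0"
  proof (rule le_0_if_le_mult_square)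
    fix t :: real
    assume "0 < t"
    have "hermitian T"
      using assms(1) by (simp add: psd_def)
    then have "inner (v - t *\<^sub>R w) (T *v (v - t *\<^sub>R w)) = t\<^sup>2 * inner w (T *v w) - t * (2 * inner w w)"
      using assms(2) hermitian_inner[of T v w]
      by (simp add: w_def matrix_vector_mult_diff_distrib matrix_vector_mult_scaleR_right inner_diff_left
          inner_diff_right power2_eq_square algebra_simps)
    then show "t * (2 * inner w w) \<le> t\<^sup>2 * inner w (T *v w)"
      using psd_inner_nonneg[OF assms(1), of "v - t *\<^sub>R w"] by linarith
  qed
  then show ?thesis
    using inner_gt_zero_iff[of w] unfolding w_def[symmetric] by fastforce
qed

lemma hermitian_subspace_eigenvector:
  fixes A :: "complex^'n^'n"
  assumes herm: "hermitian A" and W: "subspace W" and inv: "\<And>z. z \<in> W \<Longrightarrow> A *v z \<in> W"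
    and z0: "z0 \<in> W" "z0 \<noteq> 0"
  shows "\<exists>x\<in>W. norm x = 1 \<and> A *v x = inner x (A *v x) *\<^sub>R x"
proof -
  define f where "f z = inner z (A *v z)" for z
  let ?K = "W \<inter> sphere 0 1"
  have "compact ?K"
    using closed_subspace[OF W] by (intro closed_Int_compact) auto
  moreover have "(1 / norm z0) *\<^sub>R z0 \<in> ?K"
    using z0 W by (simp add: subspace_scale)
  moreover have "continuous_on ?K f"
    unfolding f_def by (intro continuous_intros linear_continuous_on bounded_linear_intros) auto
  ultimately obtain x where "x \<in> ?K" and x_max: "\<And>z. z \<in> ?K \<Longrightarrow> f z \<le> f x"
    using continuous_attains_sup[of ?K f] by blast
  then have xW: "x \<in> W" and nx: "norm x = 1"
    by auto
  define lam where "lam = f x"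
  have f_le: "f z \<le> lam * (norm z)\<^sup>2" if "z \<in> W" for z
  proof (cases "z = 0")
    case False
    have "f ((1 / norm z) *\<^sub>R z) \<le> lam"
      using False that W x_max by (simp add: lam_def subspace_scale)
    then show ?thesis
      using False by (simp add: f_def matrix_vector_mult_scaleR_right field_simps power2_eq_square)
  qed (simp add: f_def)
  define y where "y = A *v x - lam *\<^sub>R x"
  have yW: "y \<in> W"
    unfolding y_def using xW W inv by (simp add: subspace_diff subspace_scale)
  have xx: "inner x x = 1"
    using nx by (simp add: dot_square_norm)
  have xy: "inner x y = 0"
    using xx by (simp add: y_def inner_diff_right lam_def f_def)
  have yAx: "inner y (A *v x) = inner y y"
    using xy by (simp add: y_def inner_diff_right inner_commute)
  \<comment> \<open>moving the maximiser \<open>x\<close> along the residual \<open>y\<close> would increase \<open>f\<close> to first order\<close>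
  have "2 * inner y y \<le> 0"
  proof (rule le_0_if_le_mult_square)
    fix t :: real
    assume "0 < t"
    have "inner x (A *v y) = inner y (A *v x)"
      using hermitian_inner[OF herm, of x y] by (simp add: inner_commute)
    then have "f (x + t *\<^sub>R y) = lam + t * (2 * inner y y) + t\<^sup>2 * f y"
      by (simp add: f_def lam_def yAx matrix_vector_right_distrib matrix_vector_mult_scaleR_right
          inner_add_left inner_add_right power2_eq_square algebra_simps)
    moreover have "(norm (x + t *\<^sub>R y))\<^sup>2 = 1 + t\<^sup>2 * inner y y"
      unfolding power2_norm_eq_inner
      by (simp add: inner_add_left inner_add_right xx xy inner_commute[of y x] power2_eq_square)
    moreover have "x + t *\<^sub>R y \<in> W"
      using xW yW W by (simp add: subspace_add subspace_scale)
    ultimately show "t * (2 * inner y y) \<le> t\<^sup>2 * (lam * inner y y - f y)"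
      using f_le[of "x + t *\<^sub>R y"] by (simp add: algebra_simps)
  qed
  then have "y = 0"
    using inner_gt_zero_iff[of y] by fastforce
  then show ?thesis
    using xW nx by (auto simp: y_def lam_def f_def)
qed

definition orthonormal_eigenvectors :: "complex^'n^'n \<Rightarrow> (complex^'n) set \<Rightarrow> bool" where
  "orthonormal_eigenvectors A B \<longleftrightarrow>
     finite B \<and> orthonormal B \<and> (\<forall>b\<in>B. \<exists>l::real. A *v b = l *\<^sub>R b)"

lemma orthonormal_eigenvectors_extend:
  assumes herm: "hermitian A" and B: "orthonormal_eigenvectors A B"
    and x0: "(\<Sum>b\<in>B. cinner b x0 *s b) \<noteq> x0"
  shows "\<exists>v. v \<notin> B \<and> orthonormal_eigenvectors A (insert v B)"
proof -
  have finB: "finite B" and onB: "orthonormal B" and eig: "\<forall>b\<in>B. \<exists>l::real. A *v b = l *\<^sub>R b"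
    using B by (auto simp: orthonormal_eigenvectors_def)
  define W where "W = {z. \<forall>b\<in>B. cinner b z = 0}"
  have W: "subspace W"
    by (simp add: subspace_def W_def cinner_add_right cinner_scaleR_right)
  have inv: "A *v z \<in> W" if "z \<in> W" for z
  proof -
    have "cinner b (A *v z) = 0" if "b \<in> B" for b
    proof -
      obtain l :: real where "A *v b = l *\<^sub>R b"
        using eig \<open>b \<in> B\<close> by blast
      then show ?thesis
        using \<open>z \<in> W\<close> \<open>b \<in> B\<close> by (simp add: hermitian_cinner[OF herm] cinner_scaleR_left W_def)
    qed
    then show ?thesis
      by (simp add: W_def)
  qed
  have "x0 - (\<Sum>b\<in>B. cinner b x0 *s b) \<in> W"
    using finB onB by (simp add: W_def cinner_diff_right cinner_orthonormal_sum)
  moreover have "x0 - (\<Sum>b\<in>B. cinner b x0 *s b) \<noteq> 0"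
    using x0 by simp
  ultimately obtain x where "x \<in> W" "norm x = 1" "A *v x = inner x (A *v x) *\<^sub>R x"
    using hermitian_subspace_eigenvector[OF herm W inv] by blast
  moreover from \<open>x \<in> W\<close> have "cinner b x = 0" "cinner x b = 0" if "b \<in> B" for b
    using that by (auto simp: W_def cinner_commute[of b])
  ultimately have "x \<notin> B" "orthonormal_eigenvectors A (insert x B)"
    using finB onB eig
    by (force simp: orthonormal_eigenvectors_def orthonormal_def cinner_self_eq_1_iff)+
  then show ?thesis
    by blast
qed

theorem hermitian_orthonormal_eigenbasis:
  assumes "hermitian (A :: complex^'n^'n)"
  shows "\<exists>B. orthonormal_basis B \<and> (\<forall>b\<in>B. \<exists>l::real. A *v b = l *\<^sub>R b)"
proof -
  have "\<exists>B'. orthonormal_basis B' \<and> (\<forall>b\<in>B'. \<exists>l::real. A *v b = l *\<^sub>R b)"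
    if "orthonormal_eigenvectors A B" for B
    using that
  proof (induction "DIM(complex^'n) - card B" arbitrary: B rule: less_induct)
    case (less B)
    show ?case
    proof (cases "\<forall>x. (\<Sum>b\<in>B. cinner b x *s b) = x")
      case True
      then show ?thesis
        using less.prems by (auto simp: orthonormal_basis_def orthonormal_eigenvectors_def)
    next
      case False
      then obtain v where v: "v \<notin> B" "orthonormal_eigenvectors A (insert v B)"
        using orthonormal_eigenvectors_extend[OF assms less.prems] by blast
      have "finite B" "card (insert v B) \<le> DIM(complex^'n)"
        using v(2) less.prems orthonormal_finite_card by (auto simp: orthonormal_eigenvectors_def)
      then have "DIM(complex^'n) - card (insert v B) < DIM(complex^'n) - card B"
        using v(1) by simp
      then show ?thesis
        using less.hyps v(2) by blast
    qed
  qed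
  moreover have "orthonormal_eigenvectors A {}"
    by (simp add: orthonormal_eigenvectors_def orthonormal_def)
  ultimately show ?thesis
    by blast
qed

definition diag_op :: "(complex^'n) set \<Rightarrow> (complex^'n \<Rightarrow> real) \<Rightarrow> complex^'n^'n" where
  "diag_op B r = (\<Sum>b\<in>B. r b *\<^sub>R ket_bra b b)"

lemma diag_op_mult_vector: "diag_op B r *v x = (\<Sum>b\<in>B. (of_real (r b) * cinner b x) *s b)"
  by (simp add: diag_op_def matrix_vector_mult_sum_left matrix_vector_mult_scaleR_left
      ket_bra_mult_vector scaleR_vec_eq_smult vector_smult_assoc)

lemma diag_op_mult_basis:
  assumes "orthonormal B" "finite B" "c \<in> B"
  shows "diag_op B r *v c = r c *\<^sub>R c"
proof -
  have "diag_op B r *v c = (\<Sum>b\<in>B. if b = c then r c *\<^sub>R c else 0)"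
    unfolding diag_op_mult_vector using assms
    by (intro sum.cong) (auto simp: orthonormal_def scaleR_vec_eq_smult)
  then show ?thesis
    using assms by simp
qed

lemma hermitian_diag_op: "hermitian (diag_op B r)"
  unfolding diag_op_def by (simp add: hermitian_sum_scaleR hermitian_ket_bra)

lemma trace_mult_diag_op: "trace (C ** diag_op B r) = (\<Sum>b\<in>B. of_real (r b) * cinner b (C *v b))"
  by (simp add: diag_op_def matrix_mult_sum_right matrix_mult_scaleR_right trace_sum trace_scaleR
      trace_mult_ket_bra)

lemma trace_diag_op: "orthonormal B \<Longrightarrow> trace (diag_op B r) = of_real (\<Sum>b\<in>B. r b)"
  using trace_mult_diag_op[of "mat 1" B r] by (simp add: orthonormal_def)

lemma psd_diag_op:
  assumes "orthonormal B" "\<And>b. b \<in> B \<Longrightarrow> 0 \<le> r b"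
  shows "psd (diag_op B r)"
  unfolding psd_def
proof (intro conjI allI hermitian_diag_op)
  fix x
  have "cinner x (diag_op B r *v x) = of_real (\<Sum>b\<in>B. r b * (cmod (cinner b x))\<^sup>2)"
    unfolding diag_op_mult_vector cinner_sum_right of_real_sum
    by (intro sum.cong refl)
      (simp add: cinner_smult_right cinner_commute[of x] complex_norm_square mult.assoc del: of_real_power)
  then show "0 \<le> Re (cinner x (diag_op B r *v x))"
    using assms(2) by (simp add: sum_nonneg)
qed

lemma norm_diag_op_mult_vector_le:
  assumes B: "orthonormal_basis B" and r: "\<And>b. b \<in> B \<Longrightarrow> \<bar>r b\<bar> \<le> 1"
  shows "norm (diag_op B r *v x) \<le> norm x"
proof -
  have "(norm (diag_op B r *v x))\<^sup>2 = (\<Sum>b\<in>B. (\<bar>r b\<bar> * cmod (cinner b x))\<^sup>2)"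
    using B unfolding diag_op_mult_vector orthonormal_basis_def
    by (simp add: norm_orthonormal_sum_squared norm_mult)
  also have "\<dots> \<le> (\<Sum>b\<in>B. (cmod (cinner b x))\<^sup>2)"
    using r by (intro sum_mono power_mono) (auto simp: mult_left_le_one_le)
  also have "\<dots> = (norm x)\<^sup>2"
    using B by (simp add: orthonormal_basis_parseval)
  finally show ?thesis
    by (simp add: power2_le_iff_abs_le)
qed

lemma hermitian_spectral_decomposition:
  assumes "hermitian (A :: complex^'n^'n)"
  shows "\<exists>B r. orthonormal_basis B \<and> A = diag_op B r"
proof -
  obtain B where B: "orthonormal_basis B" and "\<forall>b\<in>B. \<exists>l::real. A *v b = l *\<^sub>R b"
    using hermitian_orthonormal_eigenbasis[OF assms] by blast
  then obtain r where r: "\<And>b. b \<in> B \<Longrightarrow> A *v b = r b *\<^sub>R b"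
    by metis
  have "A = diag_op B r"
    using B by (intro matrix_eq_on_orthonormal_basis[OF B])
      (simp add: r diag_op_mult_basis orthonormal_basis_def)
  with B show ?thesis
    by blast
qed

section \<open>Trace norm\<close>

lemma psd_sqrt_unique:
  assumes T: "psd T" and S: "psd S" and TS: "T ** T = S ** (S :: complex^'n^'n)"
  shows "T = S"
proof -
  have hT: "hermitian T" and hS: "hermitian S"
    using T S by (auto simp: psd_def)
  obtain B r where B: "orthonormal_basis B" and D: "T - S = diag_op B r"
    using hermitian_spectral_decomposition[OF hermitian_diff[OF hT hS]] by blast
  have "T *v c = S *v c" if c: "c \<in> B" for c
  proof -
    have Tc: "T *v c = S *v c + r c *\<^sub>R c"
      using diag_op_mult_basis[of B c r] B c D
      by (simp add: orthonormal_basis_def matrix_vector_mult_diff_rdistrib algebra_simps)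
    \<comment> \<open>\<open>\<langle>c, (T\<^sup>2 - S\<^sup>2) c\<rangle> = r c (\<langle>c, S c\<rangle> + \<langle>c, T c\<rangle>)\<close>, a multiple of a sum of nonnegatives\<close>
    have "inner c (T *v (T *v c)) = inner (T *v c) (S *v c) + r c * inner c (T *v c)"
      by (simp add: Tc matrix_vector_right_distrib matrix_vector_mult_scaleR_right inner_add_right
          hermitian_inner[OF hT])
    also have "inner (T *v c) (S *v c) = inner (S *v c) (S *v c) + r c * inner c (S *v c)"
      by (simp add: Tc inner_add_left)
    also have "inner (S *v c) (S *v c) = inner c (S *v (S *v c))"
      by (rule hermitian_inner[OF hS, symmetric])
    finally have "r c * (inner c (S *v c) + inner c (T *v c)) = 0"
      using TS by (simp add: matrix_vector_mul_assoc distrib_left)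
    moreover have "0 \<le> inner c (S *v c)" "0 \<le> inner c (T *v c)"
      using psd_inner_nonneg S T by auto
    ultimately consider "r c = 0" | "inner c (S *v c) = 0" "inner c (T *v c) = 0"
      by (metis add_nonneg_eq_0_iff mult_eq_0_iff)
    then show ?thesis
    proof cases
      case 1
      then show ?thesis
        using Tc by simp
    next
      case 2
      then show ?thesis
        using psd_mult_vector_eq_0[OF S, of c] psd_mult_vector_eq_0[OF T, of c] by simp
    qed
  qed
  then show ?thesis
    using matrix_eq_on_orthonormal_basis[OF B] by blast
qed

lemma mat_abs_diag_op:
  assumes B: "orthonormal_basis B"
  shows "mat_abs (diag_op B r) = diag_op B (\<lambda>b. \<bar>r b\<bar>)"
  unfolding mat_abs_def
proof (rule the_equality)
  have on: "orthonormal B" "finite B"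
    using B by (auto simp: orthonormal_basis_def)
  have "psd (diag_op B (\<lambda>b. \<bar>r b\<bar>))"
    using on by (simp add: psd_diag_op)
  moreover have "diag_op B (\<lambda>b. \<bar>r b\<bar>) ** diag_op B (\<lambda>b. \<bar>r b\<bar>) = cadj (diag_op B r) ** diag_op B r"
  proof (rule matrix_eq_on_orthonormal_basis[OF B])
    fix c assume "c \<in> B"
    then have "diag_op B (\<lambda>b. \<bar>r b\<bar>) *v (diag_op B (\<lambda>b. \<bar>r b\<bar>) *v c)
        = diag_op B r *v (diag_op B r *v c)"
      using on by (simp add: diag_op_mult_basis matrix_vector_mult_scaleR_right abs_mult_self_eq)
    then show "(diag_op B (\<lambda>b. \<bar>r b\<bar>) ** diag_op B (\<lambda>b. \<bar>r b\<bar>)) *v c = (cadj (diag_op B r) ** diag_op B r) *v c"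
      using hermitian_diag_op[of B r] by (simp add: hermitian_def matrix_vector_mul_assoc)
  qed
  ultimately show "psd (diag_op B (\<lambda>b. \<bar>r b\<bar>)) \<and>
      diag_op B (\<lambda>b. \<bar>r b\<bar>) ** diag_op B (\<lambda>b. \<bar>r b\<bar>) = cadj (diag_op B r) ** diag_op B r"
    by blast
  then show "\<And>T. psd T \<and> T ** T = cadj (diag_op B r) ** diag_op B r \<Longrightarrow> T = diag_op B (\<lambda>b. \<bar>r b\<bar>)"
    using psd_sqrt_unique by metis
qed

definition contraction :: "complex^'n^'n \<Rightarrow> bool" where
  "contraction C \<longleftrightarrow> (\<forall>x. norm (C *v x) \<le> norm x)"

lemma Re_trace_mult_le_trace_abs:
  assumes "hermitian X" and C: "contraction C"
  shows "Re (trace (C ** X)) \<le> Re (trace (mat_abs X))"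
proof -
  obtain B r where B: "orthonormal_basis B" and X: "X = diag_op B r"
    using hermitian_spectral_decomposition[OF assms(1)] by blast
  have "Re (trace (C ** X)) = (\<Sum>b\<in>B. r b * inner b (C *v b))"
    by (simp add: X trace_mult_diag_op Re_cinner)
  also have "\<dots> \<le> (\<Sum>b\<in>B. \<bar>r b\<bar>)"
  proof (rule sum_mono)
    fix b assume "b \<in> B"
    then have "norm b = 1"
      using B orthonormal_norm by (auto simp: orthonormal_basis_def)
    then have "\<bar>inner b (C *v b)\<bar> \<le> 1"
      using Cauchy_Schwarz_ineq2[of b "C *v b"] C unfolding contraction_def by (metis mult_1 order_trans)
    then have "\<bar>r b\<bar> * \<bar>inner b (C *v b)\<bar> \<le> \<bar>r b\<bar>"
      by (simp add: mult_left_le)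
    then show "r b * inner b (C *v b) \<le> \<bar>r b\<bar>"
      by (metis abs_ge_self abs_mult order_trans)
  qed
  also have "\<dots> = Re (trace (mat_abs X))"
    using B by (simp add: X mat_abs_diag_op trace_diag_op orthonormal_basis_def)
  finally show ?thesis .
qed

lemma ex_contraction_Re_trace_mult_eq_trace_abs:
  assumes "hermitian X"
  shows "\<exists>C. contraction C \<and> Re (trace (C ** X)) = Re (trace (mat_abs X))"
proof -
  obtain B r where B: "orthonormal_basis B" and X: "X = diag_op B r"
    using hermitian_spectral_decomposition[OF assms] by blast
  have on: "orthonormal B" "finite B"
    using B by (auto simp: orthonormal_basis_def)
  define C where "C = diag_op B (\<lambda>b. sgn (r b))"
  have "contraction C"
    using B by (simp add: contraction_def C_def norm_diag_op_mult_vector_le abs_sgn_eq)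
  moreover have "Re (trace (C ** X)) = (\<Sum>b\<in>B. \<bar>r b\<bar>)"
    using on unfolding X trace_mult_diag_op C_def Re_sum
    by (intro sum.cong refl) (simp add: diag_op_mult_basis cinner_scaleR_right orthonormal_def abs_sgn)
  moreover have "(\<Sum>b\<in>B. \<bar>r b\<bar>) = Re (trace (mat_abs X))"
    using B by (simp add: X mat_abs_diag_op trace_diag_op orthonormal_basis_def)
  ultimately show ?thesis
    by auto
qed

section \<open>Trace distance after random unitaries\<close>

lemma inner_mult_contraction_le: "contraction C \<Longrightarrow> inner u (C *v v) \<le> norm u * norm v"
  unfolding contraction_def
  by (metis Cauchy_Schwarz_ineq2 abs_le_D1 mult_left_mono norm_ge_zero order_trans)

lemma contraction_unitary_conj:
  assumes "contraction C" "unitary U"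
  shows "contraction (cadj U ** C ** U)"
  using assms unfolding contraction_def
  by (simp add: unitary_norm_mult_vector unitary_cadj matrix_mul_assoc flip: matrix_vector_mul_assoc)
    (metis unitary_norm_mult_vector)

lemma Re_trace_mult_conj_ket_bra:
  "Re (trace (C ** (V ** ket_bra v v ** cadj V))) = inner (V *v v) (C *v (V *v v))"
proof -
  have "trace (C ** (V ** ket_bra v v ** cadj V)) = cinner v (cadj V *v (C *v (V *v v)))"
    unfolding trace_mult_conj trace_mult_ket_bra by (simp add: matrix_vector_mul_assoc matrix_mul_assoc)
  also have "\<dots> = cinner (V *v v) (C *v (V *v v))"
    by (simp add: cinner_mult_vector_left cadj_cadj)
  finally show ?thesis
    by (simp add: Re_cinner)
qed

lemma Re_trace_mult_conj_le_trace_dist: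
  assumes "hermitian (X - Y)" "contraction C" "unitary V"
  shows "Re (trace (C ** (V ** X ** cadj V))) \<le> trace_dist X Y + Re (trace (C ** (V ** Y ** cadj V)))"
proof -
  let ?C' = "cadj V ** C ** V"
  have "trace (C ** (V ** X ** cadj V)) = trace (?C' ** (X - Y)) + trace (C ** (V ** Y ** cadj V))"
    by (simp add: trace_mult_conj matrix_mult_diff_right trace_sub)
  moreover have "Re (trace (?C' ** (X - Y))) \<le> trace_dist X Y"
    unfolding trace_dist_def
    using assms by (intro Re_trace_mult_le_trace_abs contraction_unitary_conj)
  ultimately show ?thesis
    by simp
qed

lemma trace_dist_mixture_conj_pure_le:
  fixes \<rho>0 :: "complex^'n^'n" and U :: "'w \<Rightarrow> complex^'n^'n"
  assumes "hermitian \<rho>0" and p: "\<And>\<omega>. \<omega> \<in> \<Omega> \<Longrightarrow> 0 \<le> p \<omega>" "(\<Sum>\<omega>\<in>\<Omega>. p \<omega>) = 1"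
    and U: "\<And>\<omega>. \<omega> \<in> \<Omega> \<Longrightarrow> unitary (U \<omega>)"
  shows "\<exists>C. contraction C \<and>
    trace_dist (\<Sum>\<omega>\<in>\<Omega>. p \<omega> *\<^sub>R (U \<omega> ** \<rho>0 ** cadj (U \<omega>))) (V ** ket_bra \<psi> \<psi> ** cadj V)
      \<le> trace_dist \<rho>0 (ket_bra \<psi> \<psi>)
        + (\<Sum>\<omega>\<in>\<Omega>. p \<omega> * inner (U \<omega> *v \<psi>) (C *v (U \<omega> *v \<psi>)))
        - inner (V *v \<psi>) (C *v (V *v \<psi>))"
proof -
  define P where "P = ket_bra \<psi> \<psi>"
  define \<rho> where "\<rho> = (\<Sum>\<omega>\<in>\<Omega>. p \<omega> *\<^sub>R (U \<omega> ** \<rho>0 ** cadj (U \<omega>)))"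
  have herm_P: "hermitian P"
    by (simp add: P_def hermitian_ket_bra)
  have "hermitian (\<rho> - V ** P ** cadj V)"
    using assms(1) herm_P by (simp add: \<rho>_def hermitian_diff hermitian_sum_scaleR hermitian_conj)
  then obtain C where C: "contraction C"
    and "Re (trace (C ** (\<rho> - V ** P ** cadj V))) = trace_dist \<rho> (V ** P ** cadj V)"
    using ex_contraction_Re_trace_mult_eq_trace_abs unfolding trace_dist_def by metis
  then have "trace_dist \<rho> (V ** P ** cadj V)
      = (\<Sum>\<omega>\<in>\<Omega>. p \<omega> * Re (trace (C ** (U \<omega> ** \<rho>0 ** cadj (U \<omega>))))) - inner (V *v \<psi>) (C *v (V *v \<psi>))"
    by (simp add: \<rho>_def P_def matrix_mult_diff_right trace_sub matrix_mult_sum_right matrix_mult_scaleR_right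
        trace_sum trace_scaleR Re_sum Re_trace_mult_conj_ket_bra)
  also have "\<dots> \<le> (\<Sum>\<omega>\<in>\<Omega>. p \<omega> * (trace_dist \<rho>0 P + inner (U \<omega> *v \<psi>) (C *v (U \<omega> *v \<psi>))))
      - inner (V *v \<psi>) (C *v (V *v \<psi>))"
    using Re_trace_mult_conj_le_trace_dist[OF hermitian_diff[OF assms(1) herm_P] C U] p(1)
    by (intro diff_right_mono sum_mono mult_left_mono) (simp_all add: P_def Re_trace_mult_conj_ket_bra)
  also have "\<dots> = trace_dist \<rho>0 P + (\<Sum>\<omega>\<in>\<Omega>. p \<omega> * inner (U \<omega> *v \<psi>) (C *v (U \<omega> *v \<psi>)))
      - inner (V *v \<psi>) (C *v (V *v \<psi>))"
    by (simp add: distrib_left sum.distrib p(2) flip: sum_distrib_right)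
  finally show ?thesis
    using C unfolding \<rho>_def P_def by blast
qed

lemma average_quadratic_form_le:
  fixes v :: "'w \<Rightarrow> complex^'n"
  assumes C: "contraction C" and p: "\<And>\<omega>. \<omega> \<in> \<Omega> \<Longrightarrow> 0 \<le> p \<omega>" "(\<Sum>\<omega>\<in>\<Omega>. p \<omega>) = 1"
  shows "(\<Sum>\<omega>\<in>\<Omega>. p \<omega> * inner (v \<omega>) (C *v v \<omega>))
    \<le> inner a (C *v a) + 2 * norm a * norm ((\<Sum>\<omega>\<in>\<Omega>. p \<omega> *\<^sub>R v \<omega>) - a)
      + (\<Sum>\<omega>\<in>\<Omega>. p \<omega> * (norm (v \<omega> - a))\<^sup>2)"
proof -
  define d where "d \<omega> = v \<omega> - a" for \<omega>
  define e where "e = (\<Sum>\<omega>\<in>\<Omega>. p \<omega> *\<^sub>R v \<omega>) - a"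
  have e: "e = (\<Sum>\<omega>\<in>\<Omega>. p \<omega> *\<^sub>R d \<omega>)"
    by (simp add: e_def d_def scaleR_diff_right sum_subtractf p(2) flip: scaleR_sum_left)
  have "inner (v \<omega>) (C *v v \<omega>)
      = inner a (C *v a) + inner a (C *v d \<omega>) + inner (d \<omega>) (C *v a) + inner (d \<omega>) (C *v d \<omega>)" for \<omega>
    by (simp add: d_def matrix_vector_mult_diff_distrib inner_diff_left inner_diff_right)
  then have "(\<Sum>\<omega>\<in>\<Omega>. p \<omega> * inner (v \<omega>) (C *v v \<omega>))
      = inner a (C *v a) + inner a (C *v e) + inner e (C *v a) + (\<Sum>\<omega>\<in>\<Omega>. p \<omega> * inner (d \<omega>) (C *v d \<omega>))"
    by (simp add: e distrib_left sum.distrib p(2) matrix_vector_mult_sum_right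
        matrix_vector_mult_scaleR_right inner_sum_right inner_sum_left flip: sum_distrib_right)
  also have "\<dots> \<le> inner a (C *v a) + norm a * norm e + norm e * norm a
      + (\<Sum>\<omega>\<in>\<Omega>. p \<omega> * (norm (d \<omega>))\<^sup>2)"
    using inner_mult_contraction_le[OF C] p(1)
    by (intro add_mono sum_mono mult_left_mono) (simp_all add: power2_eq_square)
  finally show ?thesis
    by (simp add: e_def d_def)
qed

lemma op_norm_mult_vector_le: "norm (M *v x) \<le> op_norm M * norm (x :: complex^'n)"
  unfolding op_norm_def by (rule onorm) (rule matrix_vector_mul_bounded_linear)

lemma average_quadratic_form_unitary_le:
  fixes U :: "'w \<Rightarrow> complex^'n^'n"
  assumes C: "contraction C" and p: "\<And>\<omega>. \<omega> \<in> \<Omega> \<Longrightarrow> 0 \<le> p \<omega>" "(\<Sum>\<omega>\<in>\<Omega>. p \<omega>) = 1"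
    and "unitary U0" and "norm \<psi> = 1"
  shows "(\<Sum>\<omega>\<in>\<Omega>. p \<omega> * inner (U \<omega> *v \<psi>) (C *v (U \<omega> *v \<psi>))) - inner (U0 *v \<psi>) (C *v (U0 *v \<psi>))
    \<le> 2 * op_norm ((\<Sum>\<omega>\<in>\<Omega>. p \<omega> *\<^sub>R U \<omega>) - U0) + (\<Sum>\<omega>\<in>\<Omega>. p \<omega> * (op_norm (U \<omega> - U0))\<^sup>2)"
proof -
  have "(\<Sum>\<omega>\<in>\<Omega>. p \<omega> * inner (U \<omega> *v \<psi>) (C *v (U \<omega> *v \<psi>)))
    \<le> inner (U0 *v \<psi>) (C *v (U0 *v \<psi>))
      + 2 * norm (U0 *v \<psi>) * norm ((\<Sum>\<omega>\<in>\<Omega>. p \<omega> *\<^sub>R (U \<omega> *v \<psi>)) - U0 *v \<psi>)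
      + (\<Sum>\<omega>\<in>\<Omega>. p \<omega> * (norm (U \<omega> *v \<psi> - U0 *v \<psi>))\<^sup>2)"
    using p by (rule average_quadratic_form_le[OF C])
  moreover have "norm (U0 *v \<psi>) = 1"
    using assms(4,5) by (simp add: unitary_norm_mult_vector)
  moreover have "norm ((\<Sum>\<omega>\<in>\<Omega>. p \<omega> *\<^sub>R (U \<omega> *v \<psi>)) - U0 *v \<psi>)
      \<le> op_norm ((\<Sum>\<omega>\<in>\<Omega>. p \<omega> *\<^sub>R U \<omega>) - U0)"
    using op_norm_mult_vector_le[of "(\<Sum>\<omega>\<in>\<Omega>. p \<omega> *\<^sub>R U \<omega>) - U0" \<psi>] assms(5)
    by (simp add: matrix_vector_mult_diff_rdistrib matrix_vector_mult_sum_left matrix_vector_mult_scaleR_left)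
  moreover have "(\<Sum>\<omega>\<in>\<Omega>. p \<omega> * (norm (U \<omega> *v \<psi> - U0 *v \<psi>))\<^sup>2)
      \<le> (\<Sum>\<omega>\<in>\<Omega>. p \<omega> * (op_norm (U \<omega> - U0))\<^sup>2)"
    using op_norm_mult_vector_le[of "U _ - U0" \<psi>] p(1) assms(5)
    by (intro sum_mono mult_left_mono power_mono) (simp_all add: matrix_vector_mult_diff_rdistrib)
  ultimately show ?thesis
    by simp
qed

theorem lemma1:
  fixes U0 :: "complex^'n^'n"
    and U :: "'w \<Rightarrow> complex^'n^'n"
    and p :: "'w \<Rightarrow> real"
    and \<Omega> :: "'w set"
    and \<psi>0 :: "complex^'n"
    and \<rho>0 :: "complex^'n^'n"
  assumes "finite \<Omega>"
    and "\<And>\<omega>. \<omega> \<in> \<Omega> \<Longrightarrow> p \<omega> \<ge> 0"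
    and "(\<Sum>\<omega>\<in>\<Omega>. p \<omega>) = 1"
    and "unitary U0"
    and "\<And>\<omega>. \<omega> \<in> \<Omega> \<Longrightarrow> unitary (U \<omega>)"
    and "norm \<psi>0 = 1"
    and "density_op \<rho>0"
  shows "let \<rho> = (\<Sum>\<omega>\<in>\<Omega>. p \<omega> *\<^sub>R (U \<omega> ** \<rho>0 ** cadj (U \<omega>)));
             \<sigma> = U0 ** ket_bra \<psi>0 \<psi>0 ** cadj U0
         in trace_dist \<rho> \<sigma> \<le> trace_dist \<rho>0 (ket_bra \<psi>0 \<psi>0)
              + 2 * op_norm ((\<Sum>\<omega>\<in>\<Omega>. p \<omega> *\<^sub>R U \<omega>) - U0)
              + (\<Sum>\<omega>\<in>\<Omega>. p \<omega> * (op_norm (U \<omega> - U0))\<^sup>2)"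
proof -
  have "hermitian \<rho>0"
    using assms(7) by (simp add: density_op_def psd_def)
  from trace_dist_mixture_conj_pure_le[where U = U and V = U0 and \<psi> = \<psi>0, OF this assms(2,3,5)]
  obtain C where C: "contraction C" and
    "trace_dist (\<Sum>\<omega>\<in>\<Omega>. p \<omega> *\<^sub>R (U \<omega> ** \<rho>0 ** cadj (U \<omega>))) (U0 ** ket_bra \<psi>0 \<psi>0 ** cadj U0)
      \<le> trace_dist \<rho>0 (ket_bra \<psi>0 \<psi>0)
        + (\<Sum>\<omega>\<in>\<Omega>. p \<omega> * inner (U \<omega> *v \<psi>0) (C *v (U \<omega> *v \<psi>0)))
        - inner (U0 *v \<psi>0) (C *v (U0 *v \<psi>0))"
    by blast
  moreover have "(\<Sum>\<omega>\<in>\<Omega>. p \<omega> * inner (U \<omega> *v \<psi>0) (C *v (U \<omega> *v \<psi>0)))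
      - inner (U0 *v \<psi>0) (C *v (U0 *v \<psi>0))
    \<le> 2 * op_norm ((\<Sum>\<omega>\<in>\<Omega>. p \<omega> *\<^sub>R U \<omega>) - U0) + (\<Sum>\<omega>\<in>\<Omega>. p \<omega> * (op_norm (U \<omega> - U0))\<^sup>2)"
    using assms(2,3,4,6) by (rule average_quadratic_form_unitary_le[OF C])
  ultimately show ?thesis
    unfolding Let_def by linarith
qed

end
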